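(* Let $m>0$, $K\neq0$, and consider the CMC slicing of the Schwarzschild spacetime with integration constant $H=0$ (the case in which the second fundamental form of each slice is isotropic, $K_{ij}=\tfrac13 K g_{ij}$). Then every solution $\sigma_-$ of the ingoing wave phase equation on $(2m,\infty)$ is unbounded as $r\to 2m^+$; i.e. no bounded ingoing wave phase coordinate exists across the event horizon on such slices.
   Context: The CMC-sliced Schwarzschild metric is $ds^2=-(1-2m/r)dt^2+2vP^{-1/2}dt\,dr+r^4P^{-1}dr^2+r^2d\Omega^2$ with $v=Kr^3/3-H$, $P=v^2+(1-2m/r)r^4$, $K$ the mean curvature of the slices $t=$const, $H$ a real constant (here $H=0$). The ingoing wave phase equation is $(1-2m/r)\frac{3}{K}\frac{d\sigma_-}{dr}=vP^{-1/2}+b_-$ with $b_-=-1$ if $K<0$ and $b_-=+1$ if $K>0$. The trace-free part of the second fundamental form of the slices vanishes identically exactly when $H=0$. *)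

theory Defs
  imports Complex_Main
begin

definition cmc_v :: "real \<Rightarrow> real \<Rightarrow> real \<Rightarrow> real" where
  "cmc_v K H r = K * r ^ 3 / 3 - H"

definition cmc_P :: "real \<Rightarrow> real \<Rightarrow> real \<Rightarrow> real \<Rightarrow> real" where
  "cmc_P m K H r = (cmc_v K H r) ^ 2 + (1 - 2 * m / r) * r ^ 4"

definition b_minus :: "real \<Rightarrow> real" where
  "b_minus K = (if K < 0 then -1 else 1)"

definition ingoing_phase_solution ::
  "real \<Rightarrow> real \<Rightarrow> real \<Rightarrow> (real \<Rightarrow> real) \<Rightarrow> bool" where
  "ingoing_phase_solution m K H \<sigma> \<longleftrightarrow>
     (\<forall>r > 2 * m. \<exists>d. (\<sigma> has_real_derivative d) (at r) \<and>
        (1 - 2 * m / r) * (3 / K) * d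
          = cmc_v K H r / sqrt (cmc_P m K H r) + b_minus K)"

end

(* For H = 0 the function v = K r^3/3 has the sign of K, so v P^(-1/2) and b_- never cancel:
   the right-hand side of the phase equation has the sign of K and modulus at least 1. Solving
   for the derivative gives sigma'(r) >= (2 m |K| / 3) / (r - 2m), so sigma(r) minus
   (2 m |K| / 3) ln (r - 2m) is nondecreasing, which forces sigma(r) to -infinity as r -> 2m+. *)
theory Submission
  imports Defs
begin

lemma mult_b_minus: "K * b_minus K = \<bar>K\<bar>"
  by (simp add: b_minus_def)

lemma cmc_P_nonneg:
  assumes "2 * m \<le> r" and "0 \<le> r"
  shows "cmc_P m K H r \<ge> 0"
proof -
  have "(1 - 2 * m / r) * r ^ 4 = (r - 2 * m) * r ^ 3"
    by (cases "r = 0") (simp_all add: field_simps power4_eq_xxxx power3_eq_cube)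
  also have "\<dots> \<ge> 0"
    using assms by simp
  finally show ?thesis
    unfolding cmc_P_def by simp
qed

(* The nonnegativity of P matters: HOL's sqrt is odd, negative on negative arguments. *)
lemma abs_le_mult_ingoing_rhs:
  assumes "2 * m \<le> r" and "0 \<le> r"
  shows "\<bar>K\<bar> \<le> K * (cmc_v K 0 r / sqrt (cmc_P m K 0 r) + b_minus K)"
proof -
  have "K * cmc_v K 0 r = K\<^sup>2 * r ^ 3 / 3"
    by (simp add: cmc_v_def power2_eq_square)
  also have "\<dots> \<ge> 0"
    using assms(2) by simp
  finally have "K * cmc_v K 0 r / sqrt (cmc_P m K 0 r) \<ge> 0"
    using cmc_P_nonneg[OF assms] by simp
  then show ?thesis
    by (simp add: distrib_left mult_b_minus)
qed

lemma ingoing_phase_derivative_lower_bound: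
  assumes "0 \<le> m" and "K \<noteq> 0" and "2 * m < r"
    and "(1 - 2 * m / r) * (3 / K) * d = cmc_v K 0 r / sqrt (cmc_P m K 0 r) + b_minus K"
  shows "2 * m * \<bar>K\<bar> / 3 / (r - 2 * m) \<le> d"
proof -
  define R where "R = cmc_v K 0 r / sqrt (cmc_P m K 0 r) + b_minus K"
  have "0 < r"
    using assms(1,3) by linarith
  then have d_eq: "d = K * R * r / (3 * (r - 2 * m))"
    using assms(2-4) by (simp add: R_def field_simps)
  have "\<bar>K\<bar> \<le> K * R"
    unfolding R_def using assms(3) \<open>0 < r\<close> by (intro abs_le_mult_ingoing_rhs) auto
  then have "\<bar>K\<bar> * (2 * m) \<le> K * R * r"
    using assms(1,3) by (intro mult_mono) auto
  then have "\<bar>K\<bar> * (2 * m) / (3 * (r - 2 * m)) \<le> K * R * r / (3 * (r - 2 * m))"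
    using assms(3) by (intro divide_right_mono) auto
  then show ?thesis
    by (simp add: d_eq mult.commute)
qed

lemma filterlim_ln_minus_at_right: "filterlim (\<lambda>x. ln (x - a)) at_bot (at_right a)"
  for a :: real
  using ln_at_0 by (simp add: filterlim_at_right_to_0[of _ _ a])

lemma DERIV_ge_inverse_imp_filterlim_at_bot:
  fixes f :: "real \<Rightarrow> real"
  assumes "a < b" and "0 < c"
    and deriv: "\<And>x. a < x \<Longrightarrow> x < b \<Longrightarrow> \<exists>d. (f has_real_derivative d) (at x) \<and> c / (x - a) \<le> d"
  shows "filterlim f at_bot (at_right a)"
proof -
  define g where "g x = f x - c * ln (x - a)" for x
  define r0 where "r0 = (a + b) / 2"
  have "a < r0" "r0 < b"
    using assms(1) by (simp_all add: r0_def)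
  have g_mono: "g x \<le> g r0" if "a < x" "x \<le> r0" for x
  proof (rule DERIV_nonneg_imp_nondecreasing[OF \<open>x \<le> r0\<close>])
    fix y assume "x \<le> y" "y \<le> r0"
    then have "a < y" "y < b"
      using that \<open>r0 < b\<close> by linarith+
    then obtain d where "(f has_real_derivative d) (at y)" "c / (y - a) \<le> d"
      using deriv by blast
    then have "(g has_real_derivative d - c * (1 / (y - a))) (at y)"
      unfolding g_def[abs_def] using \<open>a < y\<close> by (auto intro!: derivative_eq_intros)
    then show "\<exists>d. (g has_real_derivative d) (at y) \<and> 0 \<le> d"
      using \<open>c / (y - a) \<le> d\<close> by fastforce
  qed
  have "f x \<le> g r0 + c * ln (x - a)" if "a < x" "x < r0" for x
    using g_mono[of x] that by (simp add: g_def)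
  then have upper: "\<forall>\<^sub>F x in at_right a. f x \<le> g r0 + c * ln (x - a)"
    unfolding eventually_at_right_field using \<open>a < r0\<close> by blast
  have log_bound: "filterlim (\<lambda>x. g r0 + c * ln (x - a)) at_bot (at_right a)"
    using filterlim_tendsto_pos_mult_at_bot[OF tendsto_const \<open>0 < c\<close> filterlim_ln_minus_at_right[of a]]
    by (simp add: filterlim_tendsto_add_at_bot_iff[OF tendsto_const])
  show ?thesis
    unfolding filterlim_at_bot
  proof
    fix Z :: real
    have "\<forall>\<^sub>F x in at_right a. g r0 + c * ln (x - a) \<le> Z"
      using log_bound by (simp add: filterlim_at_bot)
    with upper show "\<forall>\<^sub>F x in at_right a. f x \<le> Z"
      by eventually_elim simp
  qed
qed

theorem mainTheorem2:
  fixes m K :: real and \<sigma> :: "real \<Rightarrow> real"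
  assumes "m > 0" and "K \<noteq> 0"
    and "ingoing_phase_solution m K 0 \<sigma>"
  shows "\<not> (\<exists>B. \<forall>\<^sub>F r in at_right (2 * m). \<bar>\<sigma> r\<bar> \<le> B)"
proof
  assume "\<exists>B. \<forall>\<^sub>F r in at_right (2 * m). \<bar>\<sigma> r\<bar> \<le> B"
  then obtain B where bounded: "\<forall>\<^sub>F r in at_right (2 * m). \<bar>\<sigma> r\<bar> \<le> B"
    by blast
  have "filterlim \<sigma> at_bot (at_right (2 * m))"
  proof (rule DERIV_ge_inverse_imp_filterlim_at_bot)
    show "2 * m < 2 * m + 1" "0 < 2 * m * \<bar>K\<bar> / 3"
      using assms(1,2) by simp_all
    fix r assume "2 * m < r" "r < 2 * m + 1"
    with assms show "\<exists>d. (\<sigma> has_real_derivative d) (at r) \<and> 2 * m * \<bar>K\<bar> / 3 / (r - 2 * m) \<le> d"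
      unfolding ingoing_phase_solution_def
      by (meson ingoing_phase_derivative_lower_bound less_imp_le)
  qed
  then have "\<forall>\<^sub>F r in at_right (2 * m). \<sigma> r \<le> - B - 1"
    by (simp add: filterlim_at_bot)
  with bounded have "\<forall>\<^sub>F r in at_right (2 * m). False"
    by eventually_elim simp
  then show False
    by simp
qed

end
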